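(* Let $a,b$ be integers with $b>a>2$ and $\gcd(a,b)=1$. Then for every integer $c\geq (a-1)(b-1)$ there exists a tame polynomial automorphism $F$ of $\mathbb{C}^3$ with $\operatorname{mdeg}F=(a,b,c)$.
   Context: For a polynomial automorphism $F=(F_1,\ldots,F_n)$ of $\mathbb{C}^n$, its multidegree is $\operatorname{mdeg}F:=(\deg F_1,\ldots,\deg F_n)$, where $\deg$ is total degree. A map $F=(F_1,\ldots,F_n)$ is elementary if for some $j\leq n$ and some polynomial $g$ in $n-1$ variables, $F_j=X_j+g(X_1,\ldots,\widehat{X_j},\ldots,X_n)$ and $F_i=X_i$ for $i\neq j$. A polynomial automorphism is tame if it is a composition of invertible affine-linear maps and elementary maps. *)

theory Defs
  imports Complex_Main
begin

type_synonym pt3 = "complex \<times> complex \<times> complex"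

text \<open>Polynomials in X1,X2,X3 over C as coefficient functions on exponent triples with finite support.\<close>

definition poly3_eval :: "(nat \<times> nat \<times> nat \<Rightarrow> complex) \<Rightarrow> pt3 \<Rightarrow> complex" where
  "poly3_eval c = (\<lambda>(x,y,z). \<Sum>m\<in>{m. c m \<noteq> 0}.
       c m * x ^ fst m * y ^ fst (snd m) * z ^ snd (snd m))"

definition is_poly3 :: "(pt3 \<Rightarrow> complex) \<Rightarrow> bool" where
  "is_poly3 f \<longleftrightarrow> (\<exists>c. finite {m. c m \<noteq> 0} \<and> f = poly3_eval c)"

text \<open>Total degree of a polynomial function (coefficients are unique over C);
  the zero polynomial gets degree 0 by convention (irrelevant here).\<close>
definition tdeg :: "(pt3 \<Rightarrow> complex) \<Rightarrow> nat" where
  "tdeg f = (THE d. \<exists>c. finite {m. c m \<noteq> 0} \<and> f = poly3_eval c \<and>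
       d = Max ({fst m + fst (snd m) + snd (snd m) | m. c m \<noteq> 0} \<union> {0}))"

definition mdeg :: "(pt3 \<Rightarrow> pt3) \<Rightarrow> nat \<times> nat \<times> nat" where
  "mdeg F = (tdeg (\<lambda>v. fst (F v)), tdeg (\<lambda>v. fst (snd (F v))), tdeg (\<lambda>v. snd (snd (F v))))"

definition affine_aut :: "(pt3 \<Rightarrow> pt3) \<Rightarrow> bool" where
  "affine_aut F \<longleftrightarrow> (\<exists>a11 a12 a13 a21 a22 a23 a31 a32 a33 b1 b2 b3 :: complex.
     a11*(a22*a33 - a23*a32) - a12*(a21*a33 - a23*a31) + a13*(a21*a32 - a22*a31) \<noteq> 0 \<and>
     F = (\<lambda>(x,y,z). (a11*x + a12*y + a13*z + b1,
                      a21*x + a22*y + a23*z + b2,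
                      a31*x + a32*y + a33*z + b3)))"

definition elementary :: "(pt3 \<Rightarrow> pt3) \<Rightarrow> bool" where
  "elementary F \<longleftrightarrow> (\<exists>g :: complex \<times> complex \<Rightarrow> complex.
      is_poly3 (\<lambda>(x,y,z). g (y,z)) \<and> F = (\<lambda>(x,y,z). (x + g (y,z), y, z)))
   \<or> (\<exists>g :: complex \<times> complex \<Rightarrow> complex.
      is_poly3 (\<lambda>(x,y,z). g (x,z)) \<and> F = (\<lambda>(x,y,z). (x, y + g (x,z), z)))
   \<or> (\<exists>g :: complex \<times> complex \<Rightarrow> complex.
      is_poly3 (\<lambda>(x,y,z). g (x,y)) \<and> F = (\<lambda>(x,y,z). (x, y, z + g (x,y))))"

inductive_set tame :: "(pt3 \<Rightarrow> pt3) set" where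
  affine: "affine_aut F \<Longrightarrow> F \<in> tame"
| elem: "elementary F \<Longrightarrow> F \<in> tame"
| comp: "F \<in> tame \<Longrightarrow> G \<in> tame \<Longrightarrow> F \<circ> G \<in> tame"

end

theory Submission
  imports Defs "HOL-Computational_Algebra.Polynomial"
begin

(* The automorphism is the composition of three elementary maps,
     F = (x + y^a, y + z^b, z + (x + y^a)^i * (y + z^b)^j),
   where c = a*i + b*j is a representation of c by the coins a and b, which
   exists because c is at least the Frobenius bound (a - 1)(b - 1). *)

section \<open>Monomials and coefficient uniqueness\<close>

definition mono3 :: "nat \<times> nat \<times> nat \<Rightarrow> pt3 \<Rightarrow> complex" where
  "mono3 m v = fst v ^ fst m * fst (snd v) ^ fst (snd m) * snd (snd v) ^ snd (snd m)"

definition exp_deg :: "nat \<times> nat \<times> nat \<Rightarrow> nat" where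
  "exp_deg m = fst m + fst (snd m) + snd (snd m)"

lemma poly3_eval_mono3: "poly3_eval c v = (\<Sum>m\<in>{m. c m \<noteq> 0}. c m * mono3 m v)"
  by (cases v) (simp add: poly3_eval_def mono3_def mult.assoc)

lemma poly3_eval_superset:
  assumes "finite S" "{m. c m \<noteq> 0} \<subseteq> S"
  shows "poly3_eval c v = (\<Sum>m\<in>S. c m * mono3 m v)"
  unfolding poly3_eval_mono3
  by (rule sum.mono_neutral_left) (use assms in auto)

lemma mono3_scale: "mono3 m (t*x, t*y, t*z) = t ^ exp_deg m * mono3 m (x,y,z)"
  by (simp add: mono3_def exp_deg_def power_mult_distrib power_add mult_ac)

text \<open>A polynomial function vanishing on all of \<open>\<complex>\<^sup>3\<close> has only zero coefficients:
  view it as a polynomial in \<open>z\<close> with coefficients polynomial in \<open>y\<close>, whose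
  coefficients in turn are polynomials in \<open>x\<close>, and peel off one variable at a time.\<close>
lemma poly3_eval_zero_coeffs:
  assumes fin: "finite {m. c m \<noteq> 0}" and zero: "\<And>v. poly3_eval c v = 0"
  shows "c m = 0"
proof (rule ccontr)
  assume "c m \<noteq> 0"
  define S where "S = {m. c m \<noteq> 0}"
  define N where "N = Max (insert 0 (exp_deg ` S))"
  have bound: "fst m \<le> N \<and> fst (snd m) \<le> N \<and> snd (snd m) \<le> N" if "m \<in> S" for m
  proof -
    have "exp_deg m \<le> N" unfolding N_def using that fin S_def by (intro Max_ge) auto
    then show ?thesis unfolding exp_deg_def by auto
  qed
  define B where "B = {..N} \<times> {..N} \<times> {..N}"
  have nested: "(\<Sum>k\<le>N. (\<Sum>j\<le>N. (\<Sum>i\<le>N. c (i,j,k) * x^i) * y^j) * z^k) = 0" for x y z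
  proof -
    have "poly3_eval c (x,y,z) = (\<Sum>m\<in>B. c m * mono3 m (x,y,z))"
      by (rule poly3_eval_superset) (use bound in \<open>auto simp: S_def B_def\<close>)
    also have "\<dots> = (\<Sum>i\<le>N. \<Sum>j\<le>N. \<Sum>k\<le>N. c (i,j,k) * (x^i * y^j * z^k))"
      unfolding B_def by (simp add: sum.cartesian_product mono3_def case_prod_beta)
    also have "\<dots> = (\<Sum>i\<le>N. \<Sum>k\<le>N. \<Sum>j\<le>N. c (i,j,k) * (x^i * y^j * z^k))"
      by (rule sum.cong[OF refl]) (rule sum.swap)
    also have "\<dots> = (\<Sum>k\<le>N. \<Sum>i\<le>N. \<Sum>j\<le>N. c (i,j,k) * (x^i * y^j * z^k))"
      by (rule sum.swap)
    also have "\<dots> = (\<Sum>k\<le>N. \<Sum>j\<le>N. \<Sum>i\<le>N. c (i,j,k) * (x^i * y^j * z^k))"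
      by (rule sum.cong[OF refl]) (rule sum.swap)
    also have "\<dots> = (\<Sum>k\<le>N. (\<Sum>j\<le>N. (\<Sum>i\<le>N. c (i,j,k) * x^i) * y^j) * z^k)"
      by (simp add: sum_distrib_left sum_distrib_right mult_ac)
    finally show ?thesis using zero by simp
  qed
  obtain i j k where m: "m = (i,j,k)" by (cases m) auto
  with \<open>c m \<noteq> 0\<close> bound have ijk: "i \<le> N" "j \<le> N" "k \<le> N" by (auto simp: S_def)
  have "\<forall>k\<le>N. (\<Sum>j\<le>N. (\<Sum>i\<le>N. c (i,j,k) * x^i) * y^j) = 0" for x y
    using polyfun_eq_0[of "\<lambda>k. \<Sum>j\<le>N. (\<Sum>i\<le>N. c (i,j,k) * x^i) * y^j" N] nested by blast
  then have "\<forall>j\<le>N. (\<Sum>i\<le>N. c (i,j,k) * x^i) = 0" for x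
    using polyfun_eq_0[of "\<lambda>j. \<Sum>i\<le>N. c (i,j,k) * x^i" N] ijk by blast
  then have "\<forall>i\<le>N. c (i,j,k) = 0"
    using polyfun_eq_0[of "\<lambda>i. c (i,j,k)" N] ijk by blast
  with ijk m \<open>c m \<noteq> 0\<close> show False by simp
qed

lemma poly3_eval_coeffs_unique:
  assumes "finite {m. c1 m \<noteq> 0}" "finite {m. c2 m \<noteq> 0}" "poly3_eval c1 = poly3_eval c2"
  shows "c1 = c2"
proof -
  define S where "S = {m. c1 m \<noteq> 0} \<union> {m. c2 m \<noteq> 0}"
  have finS: "finite S" using assms S_def by auto
  have "finite {m. c1 m - c2 m \<noteq> 0}" by (rule finite_subset[OF _ finS]) (auto simp: S_def)
  moreover have "poly3_eval (\<lambda>m. c1 m - c2 m) v = 0" for v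
  proof -
    have "poly3_eval (\<lambda>m. c1 m - c2 m) v = (\<Sum>m\<in>S. (c1 m - c2 m) * mono3 m v)"
      by (rule poly3_eval_superset) (use finS S_def in auto)
    also have "\<dots> = poly3_eval c1 v - poly3_eval c2 v"
      by (simp add: left_diff_distrib sum_subtractf poly3_eval_superset[OF finS] S_def)
    finally show ?thesis using assms(3) by simp
  qed
  ultimately have "c1 m - c2 m = 0" for m
    using poly3_eval_zero_coeffs[of "\<lambda>m. c1 m - c2 m"] by blast
  then show ?thesis by auto
qed

lemma tdeg_poly3_eval:
  assumes fin: "finite {m. c m \<noteq> 0}"
  shows "tdeg (poly3_eval c) = Max (insert 0 (exp_deg ` {m. c m \<noteq> 0}))"
proof -
  have Max_eq: "Max ({fst m + fst (snd m) + snd (snd m) | m. c' m \<noteq> 0} \<union> {0})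
      = Max (insert 0 (exp_deg ` {m. c' m \<noteq> 0}))" for c'
    by (rule arg_cong[where f=Max]) (unfold exp_deg_def image_def, blast)
  show ?thesis
    unfolding tdeg_def Max_eq
  proof (rule the_equality)
    fix d assume "\<exists>c'. finite {m. c' m \<noteq> 0} \<and> poly3_eval c = poly3_eval c' \<and>
      d = Max (insert 0 (exp_deg ` {m. c' m \<noteq> 0}))"
    then obtain c' where "finite {m. c' m \<noteq> 0}" "poly3_eval c = poly3_eval c'"
      "d = Max (insert 0 (exp_deg ` {m. c' m \<noteq> 0}))" by blast
    with fin show "d = Max (insert 0 (exp_deg ` {m. c m \<noteq> 0}))"
      using poly3_eval_coeffs_unique[of c c'] by simp
  qed (use fin in blast)
qed

section \<open>Degree bounds\<close>

definition deg_le :: "(pt3 \<Rightarrow> complex) \<Rightarrow> nat \<Rightarrow> bool" where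
  "deg_le f d \<longleftrightarrow>
     (\<exists>c. finite {m. c m \<noteq> 0} \<and> f = poly3_eval c \<and> (\<forall>m. c m \<noteq> 0 \<longrightarrow> exp_deg m \<le> d))"

lemma deg_leI:
  assumes fin: "finite I" and deg: "\<And>i. i \<in> I \<Longrightarrow> exp_deg (e i) \<le> d"
    and f: "\<And>v. f v = (\<Sum>i\<in>I. w i * mono3 (e i) v)"
  shows "deg_le f d"
proof -
  define c where "c m = (\<Sum>i\<in>{i\<in>I. e i = m}. w i)" for m
  have supp: "{m. c m \<noteq> 0} \<subseteq> e ` I"
  proof
    fix m assume "m \<in> {m. c m \<noteq> 0}"
    then have "c m \<noteq> 0" by simp
    moreover have "m \<notin> e ` I \<Longrightarrow> {i\<in>I. e i = m} = {}" by auto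
    ultimately show "m \<in> e ` I" unfolding c_def by fastforce
  qed
  have "poly3_eval c v = f v" for v
  proof -
    have "poly3_eval c v = (\<Sum>m\<in>e ` I. c m * mono3 m v)"
      by (rule poly3_eval_superset) (use fin supp in auto)
    also have "\<dots> = (\<Sum>m\<in>e ` I. \<Sum>i\<in>{i\<in>I. e i = m}. w i * mono3 (e i) v)"
      unfolding c_def sum_distrib_right by (intro sum.cong refl) auto
    also have "\<dots> = f v"
      unfolding f by (rule sum.group) (use fin in auto)
    finally show ?thesis .
  qed
  then have "f = poly3_eval c" by (simp add: fun_eq_iff)
  moreover have "finite {m. c m \<noteq> 0}" using finite_subset[OF supp] fin by blast
  moreover have "\<forall>m. c m \<noteq> 0 \<longrightarrow> exp_deg m \<le> d" using supp deg by blast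
  ultimately show ?thesis unfolding deg_le_def by blast
qed

lemma deg_leE:
  assumes "deg_le f d"
  obtains S c where "finite S" "\<And>m. m \<in> S \<Longrightarrow> exp_deg m \<le> d"
    "\<And>v. f v = (\<Sum>m\<in>S. c m * mono3 m v)"
  using assms unfolding deg_le_def poly3_eval_mono3 by blast

lemma deg_le_mono: "deg_le f d \<Longrightarrow> d \<le> d' \<Longrightarrow> deg_le f d'"
  unfolding deg_le_def by (blast intro: order_trans)

lemma deg_le_is_poly3: "deg_le f d \<Longrightarrow> is_poly3 f"
  unfolding deg_le_def is_poly3_def by blast

lemma deg_le_const: "deg_le (\<lambda>v. k) 0"
  by (rule deg_leI[of "{()}" "\<lambda>_. (0,0,0)" _ _ "\<lambda>_. k"]) (auto simp: exp_deg_def mono3_def)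

lemma deg_le_x: "deg_le (\<lambda>v. fst v) 1"
  by (rule deg_leI[of "{()}" "\<lambda>_. (1,0,0)" _ _ "\<lambda>_. 1"]) (auto simp: exp_deg_def mono3_def)

lemma deg_le_y: "deg_le (\<lambda>v. fst (snd v)) 1"
  by (rule deg_leI[of "{()}" "\<lambda>_. (0,1,0)" _ _ "\<lambda>_. 1"]) (auto simp: exp_deg_def mono3_def)

lemma deg_le_z: "deg_le (\<lambda>v. snd (snd v)) 1"
  by (rule deg_leI[of "{()}" "\<lambda>_. (0,0,1)" _ _ "\<lambda>_. 1"]) (auto simp: exp_deg_def mono3_def)

lemma deg_le_add:
  assumes "deg_le f d" "deg_le g d"
  shows "deg_le (\<lambda>v. f v + g v) d"
proof -
  obtain S1 c1 where 1: "finite S1" "\<And>m. m \<in> S1 \<Longrightarrow> exp_deg m \<le> d"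
    "\<And>v. f v = (\<Sum>m\<in>S1. c1 m * mono3 m v)" using deg_leE[OF assms(1)] by blast
  obtain S2 c2 where 2: "finite S2" "\<And>m. m \<in> S2 \<Longrightarrow> exp_deg m \<le> d"
    "\<And>v. g v = (\<Sum>m\<in>S2. c2 m * mono3 m v)" using deg_leE[OF assms(2)] by blast
  show ?thesis
    by (rule deg_leI[of "S1 <+> S2" "case_sum id id" d _ "case_sum c1 c2"])
       (use 1 2 in \<open>auto simp: sum.Plus comp_def\<close>)
qed

definition exp_add :: "nat \<times> nat \<times> nat \<Rightarrow> nat \<times> nat \<times> nat \<Rightarrow> nat \<times> nat \<times> nat" where
  "exp_add m n = (fst m + fst n, fst (snd m) + fst (snd n), snd (snd m) + snd (snd n))"

lemma mono3_exp_add: "mono3 (exp_add m n) v = mono3 m v * mono3 n v"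
  by (simp add: mono3_def exp_add_def power_add mult_ac)

lemma deg_le_mult:
  assumes "deg_le f d" "deg_le g e"
  shows "deg_le (\<lambda>v. f v * g v) (d + e)"
proof -
  obtain S1 c1 where 1: "finite S1" "\<And>m. m \<in> S1 \<Longrightarrow> exp_deg m \<le> d"
    "\<And>v. f v = (\<Sum>m\<in>S1. c1 m * mono3 m v)" using deg_leE[OF assms(1)] by blast
  obtain S2 c2 where 2: "finite S2" "\<And>m. m \<in> S2 \<Longrightarrow> exp_deg m \<le> e"
    "\<And>v. g v = (\<Sum>m\<in>S2. c2 m * mono3 m v)" using deg_leE[OF assms(2)] by blast
  show ?thesis
  proof (rule deg_leI[of "S1 \<times> S2" "\<lambda>(m,n). exp_add m n" _ _ "\<lambda>(m,n). c1 m * c2 n"])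
    show "\<And>i. i \<in> S1 \<times> S2 \<Longrightarrow> exp_deg ((\<lambda>(m,n). exp_add m n) i) \<le> d + e"
      using 1 2 by (fastforce simp: exp_deg_def exp_add_def)
    show "\<And>v. f v * g v = (\<Sum>i\<in>S1 \<times> S2. (\<lambda>(m,n). c1 m * c2 n) i * mono3 ((\<lambda>(m,n). exp_add m n) i) v)"
      by (simp add: 1(3) 2(3) sum_product sum.cartesian_product' mono3_exp_add mult_ac)
  qed (use 1 2 in simp)
qed

lemma deg_le_pow: "deg_le f d \<Longrightarrow> deg_le (\<lambda>v. f v ^ n) (d * n)"
proof (induction n)
  case 0
  then show ?case using deg_le_const[of 1] by simp
next
  case (Suc n)
  have "deg_le (\<lambda>v. f v * f v ^ n) (d + d * n)" by (rule deg_le_mult) (use Suc in auto)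
  then show ?case by (simp add: mult_ac)
qed

section \<open>Detecting the total degree on a line\<close>

text \<open>If \<open>f\<close> has degree at most \<open>d\<close> and its restriction to the line \<open>t \<mapsto> t\<cdot>(u,v,w)\<close> is a
  polynomial of degree exactly \<open>d\<close>, then \<open>f\<close> has total degree \<open>d\<close>: along the line each
  monomial of degree \<open>k\<close> contributes a multiple of \<open>t\<^sup>k\<close>, so no monomial of degree \<open>d\<close>
  can be missing.\<close>
lemma tdeg_via_line:
  assumes "deg_le f d" and line: "\<And>t. f (t*u, t*v, t*w) = poly p t" and "degree p = d"
  shows "tdeg f = d"
proof -
  obtain c where fin: "finite {m. c m \<noteq> 0}" and f: "f = poly3_eval c"
    and bound: "\<And>m. c m \<noteq> 0 \<Longrightarrow> exp_deg m \<le> d"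
    using assms(1) unfolding deg_le_def by blast
  define D where "D = Max (insert 0 (exp_deg ` {m. c m \<noteq> 0}))"
  have le: "D \<le> d" unfolding D_def using fin bound by (auto intro!: Max.boundedI)
  define q where "q = (\<Sum>m\<in>{m. c m \<noteq> 0}. monom (c m * mono3 m (u,v,w)) (exp_deg m))"
  have "poly q t = poly p t" for t
  proof -
    have "poly q t = (\<Sum>m\<in>{m. c m \<noteq> 0}. c m * mono3 m (t*u,t*v,t*w))"
      unfolding q_def by (simp add: poly_sum poly_monom mono3_scale mult_ac)
    also have "\<dots> = poly p t" using line by (simp add: f poly3_eval_mono3)
    finally show ?thesis .
  qed
  then have "q = p" using poly_eq_poly_eq_iff by blast
  moreover have "degree q \<le> D"
    unfolding q_def
  proof (rule degree_sum_le[OF fin])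
    fix m assume "m \<in> {m. c m \<noteq> 0}"
    then have "exp_deg m \<le> D" unfolding D_def using fin by (intro Max_ge) auto
    then show "degree (monom (c m * mono3 m (u,v,w)) (exp_deg m)) \<le> D"
      using degree_monom_le order_trans by blast
  qed
  ultimately have "D = d" using le \<open>degree p = d\<close> by simp
  then show ?thesis using tdeg_poly3_eval[OF fin] by (simp add: f D_def)
qed

section \<open>The coin lemma\<close>

text \<open>Every \<open>c \<ge> (a - 1)(b - 1)\<close> is a nonnegative combination of coprime \<open>a\<close> and \<open>b\<close>:
  choose \<open>j < a\<close> with \<open>b j \<equiv> c (mod a)\<close>; then \<open>b j \<le> c\<close>, since otherwise
  \<open>c + a \<le> b j \<le> b (a - 1)\<close>, contradicting the bound on \<open>c\<close>.\<close>
lemma coin_representation: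
  fixes a b c :: nat
  assumes "0 < a" "0 < b" "coprime a b" "(a - 1) * (b - 1) \<le> c"
  shows "\<exists>i j. c = a * i + b * j"
proof -
  have "gcd b a = 1" using assms(3) by (simp add: coprime_iff_gcd_eq_1 gcd.commute)
  then obtain x y where xy: "b * x = a * y + 1" using bezout_nat[of b a] assms by auto
  define j where "j = (x * c) mod a"
  have "j < a" unfolding j_def using assms by simp
  have cong: "(b * j) mod a = c mod a"
  proof -
    have "(b * j) mod a = (b * (x * c)) mod a" unfolding j_def by (simp add: mod_mult_right_eq)
    also have "b * (x * c) = (a * y + 1) * c" using xy by (simp add: mult.assoc[symmetric])
    also have "((a * y + 1) * c) mod a = c mod a" by (simp add: distrib_right mult.assoc)
    finally show ?thesis .
  qed
  have "b * j \<le> c"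
  proof (rule ccontr)
    assume "\<not> b * j \<le> c"
    then have "c < b * j" by simp
    with cong have "a \<le> b * j - c" by (simp add: mod_eq_dvd_iff_nat dvd_imp_le)
    moreover have "b * j \<le> b * (a - 1)" using \<open>j < a\<close> by (intro mult_le_mono2) simp
    ultimately have "c + a \<le> b * (a - 1)" using \<open>c < b * j\<close> by linarith
    moreover obtain a' b' where "a = a' + 1" "b = b' + 1"
      using assms(1,2) by (metis Suc_eq_plus1 gr0_implies_Suc)
    ultimately show False using assms(4) by (simp add: algebra_simps)
  qed
  moreover have "a dvd (c - b * j)" using mod_eq_dvd_iff_nat[of "b*j" c a] cong calculation by simp
  ultimately show ?thesis by (metis add.commute dvd_def le_add_diff_inverse)
qed

section \<open>The triangular automorphism\<close>

definition tri_map :: "nat \<Rightarrow> nat \<Rightarrow> nat \<Rightarrow> nat \<Rightarrow> pt3 \<Rightarrow> pt3" where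
  "tri_map a b i j = (\<lambda>(x,y,z). (x + y^a, y + z^b, z + (x + y^a)^i * (y + z^b)^j))"

text \<open>\<open>tri_map a b i j\<close> is the composite of the elementary maps
  \<open>x \<mapsto> x + y\<^sup>a\<close>, then \<open>y \<mapsto> y + z\<^sup>b\<close>, then \<open>z \<mapsto> z + x\<^sup>i y\<^sup>j\<close>.\<close>
lemma tri_map_tame: "tri_map a b i j \<in> tame"
proof -
  define E1 :: "pt3 \<Rightarrow> pt3" where "E1 = (\<lambda>(x,y,z). (x + (\<lambda>(y,z). y^a) (y,z), y, z))"
  define E2 :: "pt3 \<Rightarrow> pt3" where "E2 = (\<lambda>(x,y,z). (x, y + (\<lambda>(x,z). z^b) (x,z), z))"
  define E3 :: "pt3 \<Rightarrow> pt3" where "E3 = (\<lambda>(x,y,z). (x, y, z + (\<lambda>(x,y). x^i * y^j) (x,y)))"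
  have "is_poly3 (\<lambda>(x,y,z). (\<lambda>(y,z). y^a) (y,z))"
    using deg_le_is_poly3[OF deg_le_pow[OF deg_le_y]] by (simp add: case_prod_beta')
  then have "elementary E1" unfolding elementary_def E1_def by blast
  moreover have "is_poly3 (\<lambda>(x,y,z). (\<lambda>(x,z). z^b) (x,z))"
    using deg_le_is_poly3[OF deg_le_pow[OF deg_le_z]] by (simp add: case_prod_beta')
  then have "elementary E2" unfolding elementary_def E2_def by blast
  moreover have "is_poly3 (\<lambda>(x,y,z). (\<lambda>(x,y). x^i * y^j) (x,y))"
    using deg_le_is_poly3[OF deg_le_mult[OF deg_le_pow[OF deg_le_x] deg_le_pow[OF deg_le_y]]]
    by (simp add: case_prod_beta')
  then have "elementary E3" unfolding elementary_def E3_def by blast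
  moreover have "tri_map a b i j = E3 \<circ> E2 \<circ> E1"
    by (auto simp: fun_eq_iff tri_map_def E1_def E2_def E3_def)
  ultimately show ?thesis by (metis tame.comp tame.elem)
qed

text \<open>On the line \<open>t \<mapsto> (0,t,t)\<close> the third component of \<open>tri_map a b i j\<close> is
  \<open>t + t\<^sup>a\<^sup>i (t + t\<^sup>b)\<^sup>j\<close>; its degree is \<open>a i + b j\<close> since the linear term cannot cancel.\<close>
lemma degree_third_component_on_line:
  assumes "1 < b" "1 < a * i + b * j"
  shows "degree ([:0,1:] + monom (1::complex) (a*i) * ([:0,1:] + monom 1 b) ^ j) = a * i + b * j"
proof -
  define Q :: "complex poly" where "Q = [:0,1:] + monom 1 b"
  have "degree Q = b" unfolding Q_def using assms
    by (subst degree_add_eq_right) (auto simp: degree_monom_eq)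
  moreover have "Q \<noteq> 0" using \<open>degree Q = b\<close> assms by auto
  ultimately have "degree (monom 1 (a*i) * Q ^ j) = a * i + b * j"
    by (subst degree_mult_eq) (auto simp: degree_monom_eq degree_power_eq mult.commute)
  then show ?thesis
    unfolding Q_def[symmetric] using assms by (subst degree_add_eq_right) auto
qed

text \<open>The degrees of the components are read off on the lines through \<open>(0,1,0)\<close>,
  \<open>(0,0,1)\<close> and \<open>(0,1,1)\<close> respectively.\<close>
lemma mdeg_tri_map:
  assumes "0 < a" "1 < b" "1 < a * i + b * j"
  shows "mdeg (tri_map a b i j) = (a, b, a * i + b * j)"
proof -
  have "deg_le (\<lambda>v. fst v) a" "deg_le (\<lambda>v. fst (snd v)) b"
    using deg_le_mono[OF deg_le_x, of a] deg_le_mono[OF deg_le_y, of b] assms by auto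
  then have x_ya: "deg_le (\<lambda>v. fst v + fst (snd v) ^ a) a"
    and y_zb: "deg_le (\<lambda>v. fst (snd v) + snd (snd v) ^ b) b"
    using deg_le_add deg_le_pow[OF deg_le_y, of a] deg_le_pow[OF deg_le_z, of b] by auto
  have "deg_le (\<lambda>v. (fst v + fst (snd v) ^ a) ^ i * (fst (snd v) + snd (snd v) ^ b) ^ j)
      (a * i + b * j)"
    using deg_le_mult[OF deg_le_pow[OF x_ya] deg_le_pow[OF y_zb]] by simp
  moreover have "deg_le (\<lambda>v. snd (snd v)) (a * i + b * j)"
    using deg_le_mono[OF deg_le_z] assms(3) by simp
  ultimately have z_part: "deg_le (\<lambda>v. snd (snd v) + (fst v + fst (snd v) ^ a) ^ i
      * (fst (snd v) + snd (snd v) ^ b) ^ j) (a * i + b * j)"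
    using deg_le_add by blast
  have z_line: "\<And>t :: complex. snd (snd (t*0, t*1, t*1))
      + (fst (t*0, t*1, t*1) + fst (snd (t*0, t*1, t*1)) ^ a) ^ i
      * (fst (snd (t*0, t*1, t*1)) + snd (snd (t*0, t*1, t*1)) ^ b) ^ j
      = poly ([:0,1:] + monom 1 (a*i) * ([:0,1:] + monom 1 b) ^ j) t"
    by (simp add: poly_monom poly_power power_mult)
  have "(\<lambda>v. fst (tri_map a b i j v)) = (\<lambda>v. fst v + fst (snd v) ^ a)"
    by (auto simp: fun_eq_iff tri_map_def)
  then have "tdeg (\<lambda>v. fst (tri_map a b i j v)) = a"
    using tdeg_via_line[OF x_ya, where u=0 and v=1 and w=0 and p="monom 1 a"]
    by (simp add: poly_monom degree_monom_eq)
  moreover have "(\<lambda>v. fst (snd (tri_map a b i j v))) = (\<lambda>v. fst (snd v) + snd (snd v) ^ b)"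
    by (auto simp: fun_eq_iff tri_map_def)
  then have "tdeg (\<lambda>v. fst (snd (tri_map a b i j v))) = b"
    using tdeg_via_line[OF y_zb, where u=0 and v=0 and w=1 and p="monom 1 b"]
    by (simp add: poly_monom degree_monom_eq)
  moreover have "(\<lambda>v. snd (snd (tri_map a b i j v))) = (\<lambda>v. snd (snd v)
      + (fst v + fst (snd v) ^ a) ^ i * (fst (snd v) + snd (snd v) ^ b) ^ j)"
    by (auto simp: fun_eq_iff tri_map_def)
  then have "tdeg (\<lambda>v. snd (snd (tri_map a b i j v))) = a * i + b * j"
    using tdeg_via_line[OF z_part z_line degree_third_component_on_line[OF assms(2,3)]] by simp
  ultimately show ?thesis unfolding mdeg_def by simp
qed

theorem fact2:
  fixes a b c :: nat
  assumes "2 < a" and "a < b" and "coprime a b" and "(a - 1) * (b - 1) \<le> c"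
  shows "\<exists>F \<in> tame. mdeg F = (a, b, c)"
proof -
  obtain i j where c: "c = a * i + b * j"
    using coin_representation assms by (metis gr0I not_less_zero)
  have "2 * 3 \<le> (a - 1) * (b - 1)" using assms(1,2) by (intro mult_le_mono) auto
  then have "1 < a * i + b * j" using assms(4) c by simp
  then have "mdeg (tri_map a b i j) = (a, b, c)"
    using mdeg_tri_map[of a b i j] assms(1,2) c by simp
  then show ?thesis using tri_map_tame by blast
qed

end
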